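(* Let $X$ be a Banach space and let $u=\sum_{\alpha\in\mathcal{J}}u_\alpha\xi_\alpha$ belong either to $L_{2,Q}(\mathbb{W};X)$ for some sequence $Q$ of positive numbers, or to $\bigcup_{\gamma\ge0}(\mathcal{S})_{-\rho,-\gamma}(X)$ for some $0\le\rho\le1$. Then for every $\alpha\in\mathcal{J}$, $$u_\alpha=\frac{1}{\sqrt{\alpha!}}\left.\Big(\prod_{i,k}\frac{\partial^{\alpha_i^k}}{\partial h_{k,i}^{\alpha_i^k}}\Big)Su(h)\right|_{h=0}.$$
   Context: $\mathcal{J}$: multi-indices $\alpha=(\alpha_i^k)_{i,k\ge1}$ of nonnegative integers with finitely many nonzero entries; $\alpha!=\prod\alpha_i^k!$; $\{\xi_\alpha\}$ the Cameron–Martin basis (built from independent Wiener processes $w_k$ and an orthonormal basis $\{m_i\}$ of $L_2((0,T))$). For $Q=\{q_k\}$ positive, $q^\alpha=\prod q_k^{\alpha_i^k}$ and $L_{2,Q}(\mathbb{W};X)$ is the set of formal series $\sum u_\alpha\xi_\alpha$, $u_\alpha\in X$, with $\sum q^{2\alpha}\|u_\alpha\|_X^2<\infty$; $(\mathcal{S})_{-\rho,-\gamma}(X)$ is the set with $\sum_\alpha(\alpha!)^{-\rho}\prod_{i,k}(2ik)^{-\gamma\alpha_i^k}\|u_\alpha\|_X^2<\infty$. For $h=\sum_{i,k}h_{k,i}m_iy_k$ with finitely many nonzero real $h_{k,i}$, set $h^\alpha=\prod h_{k,i}^{\alpha_i^k}$; the S-transform is $Su(h)=\sum_\alpha u_\alpha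 h^\alpha/\sqrt{\alpha!}\in X$ (defined wherever the series converges), viewed as a function of the variables $h_{k,i}$. *)

theory Defs
  imports "HOL-Analysis.Analysis"
begin

text \<open>Multi-indices: alpha (i,k) stands for alpha_i^k, with i,k >= 1 and finite support.\<close>
type_synonym mindex = "nat \<times> nat \<Rightarrow> nat"

definition msupp :: "mindex \<Rightarrow> (nat \<times> nat) set" where
  "msupp \<alpha> = {p. \<alpha> p \<noteq> 0}"

definition MJ :: "mindex set" where
  "MJ = {\<alpha>. finite (msupp \<alpha>) \<and> (\<forall>i k. \<alpha> (i,k) \<noteq> 0 \<longrightarrow> 1 \<le> i \<and> 1 \<le> k)}"

definition mfact :: "mindex \<Rightarrow> real" where
  "mfact \<alpha> = (\<Prod>p\<in>msupp \<alpha>. fact (\<alpha> p))"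

definition qpow :: "(nat \<Rightarrow> real) \<Rightarrow> mindex \<Rightarrow> real" where
  "qpow q \<alpha> = (\<Prod>(i,k)\<in>msupp \<alpha>. q k ^ \<alpha> (i,k))"

text \<open>h (i,k) stands for the variable h_{k,i}; h^alpha = prod h_{k,i}^(alpha_i^k)\<close>
definition hpow :: "(nat \<times> nat \<Rightarrow> real) \<Rightarrow> mindex \<Rightarrow> real" where
  "hpow h \<alpha> = (\<Prod>p\<in>msupp \<alpha>. h p ^ \<alpha> p)"

definition in_L2Q :: "(nat \<Rightarrow> real) \<Rightarrow> (mindex \<Rightarrow> 'X::real_normed_vector) \<Rightarrow> bool" where
  "in_L2Q q u \<longleftrightarrow> (\<lambda>\<alpha>. (qpow q \<alpha>)\<^sup>2 * (norm (u \<alpha>))\<^sup>2) summable_on MJ"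

definition in_S :: "real \<Rightarrow> real \<Rightarrow> (mindex \<Rightarrow> 'X::real_normed_vector) \<Rightarrow> bool" where
  "in_S \<rho> \<gamma> u \<longleftrightarrow>
     (\<lambda>\<alpha>. mfact \<alpha> powr (-\<rho>) * (\<Prod>(i,k)\<in>msupp \<alpha>. (2 * real i * real k) powr (- \<gamma> * real (\<alpha> (i,k))))
           * (norm (u \<alpha>))\<^sup>2) summable_on MJ"

text \<open>S-transform (as an unordered sum; it is only used where the series converges)\<close>
definition Stransform :: "(mindex \<Rightarrow> 'X::real_normed_vector) \<Rightarrow> (nat \<times> nat \<Rightarrow> real) \<Rightarrow> 'X" where
  "Stransform u h = (\<Sum>\<^sub>\<infinity>\<alpha>\<in>MJ. (hpow h \<alpha> / sqrt (mfact \<alpha>)) *\<^sub>R u \<alpha>)"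

fun pderivs :: "(nat \<times> nat) list \<Rightarrow> ((nat \<times> nat \<Rightarrow> real) \<Rightarrow> 'X::real_normed_vector)
                  \<Rightarrow> (nat \<times> nat \<Rightarrow> real) \<Rightarrow> 'X" where
  "pderivs [] F = F"
| "pderivs (p # ps) F = (\<lambda>h. vector_derivative (\<lambda>t. pderivs ps F (h(p := t))) (at (h p)))"

definition pderivs_exist_on :: "(nat \<times> nat \<Rightarrow> real) set \<Rightarrow> (nat \<times> nat) list
                  \<Rightarrow> ((nat \<times> nat \<Rightarrow> real) \<Rightarrow> 'X::real_normed_vector) \<Rightarrow> bool" where
  "pderivs_exist_on U ps F \<longleftrightarrow>
     (\<forall>j < length ps. \<forall>h\<in>U.
        ((\<lambda>t. pderivs (drop (Suc j) ps) F (h(ps ! j := t))) has_vector_derivative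
            pderivs (drop j ps) F h) (at (h (ps ! j))))"

definition nbhd0 :: "real \<Rightarrow> (nat \<times> nat) set \<Rightarrow> (nat \<times> nat \<Rightarrow> real) set" where
  "nbhd0 e S = {h. (\<forall>p. p \<notin> S \<longrightarrow> h p = 0) \<and> (\<forall>p\<in>S. \<bar>h p\<bar> < e)}"

end

theory Submission
  imports Defs
begin

(* Fix the support S of alpha and let only the variables h_p, p in S, vary. There Su is the power
   series sum_beta u_beta / sqrt(beta!) h^beta in finitely many variables. Each growth condition
   on u bounds these coefficients by M rho^(-|beta|) for some rho > 0, so the series converges
   on a polydisc around 0 and may be differentiated termwise: d/dh_p maps the coefficients
   c_beta to (beta_p + 1) c_(beta + e_p). After differentiating alpha_p times in each h_p the
   constant term is alpha! u_alpha / sqrt(alpha!), which is the value at h = 0. *)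

definition mindices_on :: "'a set \<Rightarrow> ('a \<Rightarrow> nat) set" where
  "mindices_on S = {\<beta>. \<forall>p. p \<notin> S \<longrightarrow> \<beta> p = 0}"

definition mdeg :: "'a set \<Rightarrow> ('a \<Rightarrow> nat) \<Rightarrow> nat" where
  "mdeg S \<beta> = (\<Sum>q\<in>S. \<beta> q)"

definition monom_on :: "'a set \<Rightarrow> ('a \<Rightarrow> real) \<Rightarrow> ('a \<Rightarrow> nat) \<Rightarrow> real" where
  "monom_on S h \<beta> = (\<Prod>q\<in>S. h q ^ \<beta> q)"

definition pseries :: "'a set \<Rightarrow> (('a \<Rightarrow> nat) \<Rightarrow> 'X::real_normed_vector) \<Rightarrow> ('a \<Rightarrow> real) \<Rightarrow> 'X" where
  "pseries S c h = (\<Sum>\<^sub>\<infinity>\<beta>\<in>mindices_on S. monom_on S h \<beta> *\<^sub>R c \<beta>)"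

text \<open>Cauchy estimates for the coefficients of a power series converging on the open polydisc of
  radius \<open>r\<close>.\<close>
definition radius_ge :: "'a set \<Rightarrow> real \<Rightarrow> (('a \<Rightarrow> nat) \<Rightarrow> 'X::real_normed_vector) \<Rightarrow> bool" where
  "radius_ge S r c \<longleftrightarrow> (\<forall>\<rho>. 0 < \<rho> \<and> \<rho> < r \<longrightarrow> (\<exists>M. \<forall>\<beta>\<in>mindices_on S. norm (c \<beta>) * \<rho> ^ mdeg S \<beta> \<le> M))"

definition coeff_pderiv :: "'a \<Rightarrow> (('a \<Rightarrow> nat) \<Rightarrow> 'X::real_normed_vector) \<Rightarrow> ('a \<Rightarrow> nat) \<Rightarrow> 'X" where
  "coeff_pderiv p c = (\<lambda>\<beta>. real (Suc (\<beta> p)) *\<^sub>R c (\<beta>(p := Suc (\<beta> p))))"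

lemma mindices_on_upd: "p \<in> S \<Longrightarrow> \<beta> \<in> mindices_on S \<Longrightarrow> \<beta>(p := n) \<in> mindices_on S"
  by (auto simp: mindices_on_def)

lemma mdeg_upd_Suc:
  assumes "finite S" "p \<in> S"
  shows "mdeg S (\<beta>(p := Suc (\<beta> p))) = Suc (mdeg S \<beta>)"
  using assms by (simp add: mdeg_def sum.remove)

lemma le_mdeg: "finite S \<Longrightarrow> p \<in> S \<Longrightarrow> \<beta> p \<le> mdeg S \<beta>"
  unfolding mdeg_def by (rule member_le_sum) auto

lemma power_mdeg: "x ^ mdeg S \<beta> = (\<Prod>q\<in>S. x ^ \<beta> q)"
  by (simp add: mdeg_def power_sum)

lemma mdeg_remove: "finite S \<Longrightarrow> p \<in> S \<Longrightarrow> mdeg S \<beta> = \<beta> p + mdeg (S - {p}) \<beta>"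
  by (simp add: mdeg_def sum.remove)

lemma monom_on_remove:
  "finite S \<Longrightarrow> p \<in> S \<Longrightarrow> monom_on S h \<beta> = h p ^ \<beta> p * monom_on (S - {p}) h \<beta>"
  by (simp add: monom_on_def prod.remove)

lemma abs_monom_on_le:
  assumes "\<And>q. q \<in> S \<Longrightarrow> \<bar>h q\<bar> \<le> \<rho>"
  shows "\<bar>monom_on S h \<beta>\<bar> \<le> \<rho> ^ mdeg S \<beta>"
proof -
  have "\<bar>monom_on S h \<beta>\<bar> = (\<Prod>q\<in>S. \<bar>h q\<bar> ^ \<beta> q)" by (simp add: monom_on_def abs_prod power_abs)
  also have "\<dots> \<le> (\<Prod>q\<in>S. \<rho> ^ \<beta> q)"
    using assms by (intro prod_mono conjI power_mono) auto
  finally show ?thesis by (simp add: power_mdeg)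
qed

lemma monom_on_zero: "finite S \<Longrightarrow> \<beta> \<in> mindices_on S \<Longrightarrow> monom_on S (\<lambda>_. 0) \<beta> = (if \<beta> = (\<lambda>_. 0) then 1 else 0)"
  by (auto simp: monom_on_def mindices_on_def fun_eq_iff prod_zero_iff)

lemma summable_on_geometric_mdeg:
  assumes S: "finite S" and l: "0 \<le> l" "l < (1::real)"
  shows "(\<lambda>\<beta>. l ^ mdeg S \<beta>) summable_on mindices_on S"
proof -
  have "Infinite_Set_Sum.abs_summable_on (\<lambda>n::nat. l ^ n) UNIV"
    using l by (simp add: abs_summable_on_nat_iff' summable_geometric)
  then have "Infinite_Set_Sum.abs_summable_on (\<lambda>g. \<Prod>q\<in>S. l ^ g q) (PiE S (\<lambda>_. UNIV))"
    using S by (intro abs_summable_on_prod_PiE) auto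
  then have "(\<lambda>g. norm (\<Prod>q\<in>S. l ^ g q)) summable_on (PiE S (\<lambda>_. UNIV))"
    by (rule abs_summable_equivalent[THEN iffD2])
  then have PiE: "(\<lambda>g. \<Prod>q\<in>S. l ^ g q) summable_on (PiE S (\<lambda>_. UNIV))"
    using l by (simp add: abs_prod prod_nonneg)
  have "bij_betw (\<lambda>\<beta>. restrict \<beta> S) (mindices_on S) (PiE S (\<lambda>_. UNIV))"
    by (rule bij_betw_byWitness[where f'="\<lambda>g q. if q \<in> S then g q else 0"])
       (auto simp: mindices_on_def fun_eq_iff PiE_def extensional_def)
  from summable_on_reindex_bij_betw[OF this, of "\<lambda>g. \<Prod>q\<in>S. l ^ g q"] PiE
  show ?thesis by (simp add: power_mdeg)
qed

lemma nat_times_power_bounded: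
  fixes \<rho> \<rho>' :: real
  assumes "0 < \<rho>" "\<rho> < \<rho>'"
  obtains C where "\<And>n. real n * \<rho> ^ n \<le> C * \<rho>' ^ n"
proof -
  have "(\<lambda>n. of_nat n * (\<rho> / \<rho>') ^ n) \<longlonglongrightarrow> 0"
    using assms by (intro powser_times_n_limit_0) simp
  then obtain K where K: "\<And>n. norm (of_nat n * (\<rho> / \<rho>') ^ n) \<le> K"
    by (metis convergentI convergent_imp_Bseq Bseq_def)
  have "real n * \<rho> ^ n \<le> K * \<rho>' ^ n" for n
  proof -
    have "real n * \<rho> ^ n = (real n * (\<rho> / \<rho>') ^ n) * \<rho>' ^ n"
      using assms by (simp add: power_divide)
    also have "\<dots> \<le> K * \<rho>' ^ n"
      using K[of n] assms by (intro mult_right_mono) auto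
    finally show ?thesis .
  qed
  then show ?thesis by (rule that)
qed

lemma radius_ge_summable:
  assumes S: "finite S" and c: "radius_ge S r c" and \<rho>: "0 < \<rho>" "\<rho> < r"
  shows "(\<lambda>\<beta>. norm (c \<beta>) * \<rho> ^ mdeg S \<beta>) summable_on mindices_on S"
proof -
  define \<rho>' where "\<rho>' = (\<rho> + r) / 2"
  have \<rho>': "\<rho> < \<rho>'" "\<rho>' < r" using \<rho> by (auto simp: \<rho>'_def)
  obtain M where M: "\<And>\<beta>. \<beta> \<in> mindices_on S \<Longrightarrow> norm (c \<beta>) * \<rho>' ^ mdeg S \<beta> \<le> M"
    using c \<rho> \<rho>' unfolding radius_ge_def by (meson less_trans)
  have "(\<lambda>\<beta>. M * (\<rho> / \<rho>') ^ mdeg S \<beta>) summable_on mindices_on S"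
    using \<rho> \<rho>' by (intro summable_on_cmult_right summable_on_geometric_mdeg S) auto
  then show ?thesis
  proof (rule summable_on_comparison_test)
    fix \<beta> assume \<beta>: "\<beta> \<in> mindices_on S"
    have "norm (c \<beta>) * \<rho> ^ mdeg S \<beta> = (norm (c \<beta>) * \<rho>' ^ mdeg S \<beta>) * (\<rho> / \<rho>') ^ mdeg S \<beta>"
      using \<rho> \<rho>' by (simp add: power_divide)
    also have "\<dots> \<le> M * (\<rho> / \<rho>') ^ mdeg S \<beta>"
      using M[OF \<beta>] \<rho> \<rho>' by (intro mult_right_mono) auto
    finally show "norm (c \<beta>) * \<rho> ^ mdeg S \<beta> \<le> M * (\<rho> / \<rho>') ^ mdeg S \<beta>" .
  qed (use \<rho> in simp)
qed

lemma radius_ge_scaleR_mdeg: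
  assumes c: "radius_ge S r c"
  shows "radius_ge S r (\<lambda>\<beta>. real (mdeg S \<beta>) *\<^sub>R c \<beta>)"
  unfolding radius_ge_def
proof (intro allI impI)
  fix \<rho> assume \<rho>: "0 < \<rho> \<and> \<rho> < r"
  define \<rho>' where "\<rho>' = (\<rho> + r) / 2"
  have \<rho>': "\<rho> < \<rho>'" "\<rho>' < r" using \<rho> by (auto simp: \<rho>'_def)
  obtain M where M: "\<And>\<beta>. \<beta> \<in> mindices_on S \<Longrightarrow> norm (c \<beta>) * \<rho>' ^ mdeg S \<beta> \<le> M"
    using c \<rho> \<rho>' unfolding radius_ge_def by (meson less_trans)
  obtain C where C: "\<And>n. real n * \<rho> ^ n \<le> C * \<rho>' ^ n"
    using nat_times_power_bounded \<rho> \<rho>' by blast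
  have "0 \<le> C" using C[of 1] \<rho> \<rho>' mult_neg_pos[of C \<rho>'] by fastforce
  have "norm (real (mdeg S \<beta>) *\<^sub>R c \<beta>) * \<rho> ^ mdeg S \<beta> \<le> C * M" if \<beta>: "\<beta> \<in> mindices_on S" for \<beta>
  proof -
    have "norm (real (mdeg S \<beta>) *\<^sub>R c \<beta>) * \<rho> ^ mdeg S \<beta> = (real (mdeg S \<beta>) * \<rho> ^ mdeg S \<beta>) * norm (c \<beta>)"
      by simp
    also have "\<dots> \<le> C * (norm (c \<beta>) * \<rho>' ^ mdeg S \<beta>)"
      using mult_right_mono[OF C[of "mdeg S \<beta>"] norm_ge_zero[of "c \<beta>"]] by (simp add: mult_ac)
    also have "\<dots> \<le> C * M" using M[OF \<beta>] \<open>0 \<le> C\<close> by (rule mult_left_mono)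
    finally show ?thesis .
  qed
  then show "\<exists>M. \<forall>\<beta>\<in>mindices_on S. norm (real (mdeg S \<beta>) *\<^sub>R c \<beta>) * \<rho> ^ mdeg S \<beta> \<le> M" by blast
qed

lemma radius_ge_coeff_pderiv:
  assumes S: "finite S" and p: "p \<in> S" and c: "radius_ge S r c"
  shows "radius_ge S r (coeff_pderiv p c)"
  unfolding radius_ge_def
proof (intro allI impI)
  fix \<rho> assume \<rho>: "0 < \<rho> \<and> \<rho> < r"
  obtain M where M: "\<And>\<beta>. \<beta> \<in> mindices_on S \<Longrightarrow> norm (real (mdeg S \<beta>) *\<^sub>R c \<beta>) * \<rho> ^ mdeg S \<beta> \<le> M"
    using radius_ge_scaleR_mdeg[OF c] \<rho> unfolding radius_ge_def by blast
  have "norm (coeff_pderiv p c \<beta>) * \<rho> ^ mdeg S \<beta> \<le> M / \<rho>" if \<beta>: "\<beta> \<in> mindices_on S" for \<beta>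
  proof -
    define \<beta>' where "\<beta>' = \<beta>(p := Suc (\<beta> p))"
    have \<beta>': "\<beta>' \<in> mindices_on S" using mindices_on_upd[OF p \<beta>] by (simp add: \<beta>'_def)
    have deg: "mdeg S \<beta>' = Suc (mdeg S \<beta>)" using mdeg_upd_Suc[OF S p] by (simp add: \<beta>'_def)
    have le: "real (Suc (\<beta> p)) \<le> real (mdeg S \<beta>')"
      using le_mdeg[OF S p, of \<beta>'] by (simp add: \<beta>'_def)
    have "norm (coeff_pderiv p c \<beta>) * \<rho> ^ mdeg S \<beta> = (real (Suc (\<beta> p)) * norm (c \<beta>') * \<rho> ^ mdeg S \<beta>') / \<rho>"
      using \<rho> by (simp add: coeff_pderiv_def \<beta>'_def[symmetric] deg)
    also have "\<dots> \<le> (real (mdeg S \<beta>') * norm (c \<beta>') * \<rho> ^ mdeg S \<beta>') / \<rho>"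
      using le \<rho> by (intro divide_right_mono mult_right_mono) auto
    also have "\<dots> \<le> M / \<rho>" using M[OF \<beta>'] \<rho> by (intro divide_right_mono) auto
    finally show ?thesis .
  qed
  then show "\<exists>M. \<forall>\<beta>\<in>mindices_on S. norm (coeff_pderiv p c \<beta>) * \<rho> ^ mdeg S \<beta> \<le> M" by blast
qed

lemma radius_ge_coeff_pderivs:
  assumes "finite S" "set ps \<subseteq> S" "radius_ge S r c"
  shows "radius_ge S r (foldr coeff_pderiv ps c)"
  using assms by (induction ps) (auto intro: radius_ge_coeff_pderiv)

lemma pseries_has_sum:
  fixes c :: "('a \<Rightarrow> nat) \<Rightarrow> 'X::banach"
  assumes S: "finite S" and c: "radius_ge S r c" and \<rho>: "0 < \<rho>" "\<rho> < r"
    and h: "\<And>q. q \<in> S \<Longrightarrow> \<bar>h q\<bar> \<le> \<rho>"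
  shows "((\<lambda>\<beta>. monom_on S h \<beta> *\<^sub>R c \<beta>) has_sum pseries S c h) (mindices_on S)"
  unfolding pseries_def
proof (rule has_sum_infsum, rule abs_summable_summable)
  show "(\<lambda>\<beta>. norm (monom_on S h \<beta> *\<^sub>R c \<beta>)) summable_on mindices_on S"
  proof (rule summable_on_comparison_test[OF radius_ge_summable[OF S c \<rho>]])
    fix \<beta>
    show "norm (monom_on S h \<beta> *\<^sub>R c \<beta>) \<le> norm (c \<beta>) * \<rho> ^ mdeg S \<beta>"
      using abs_monom_on_le[of S h \<rho> \<beta>, OF h] by (simp add: mult.commute mult_left_mono)
  qed simp
qed

lemma pseries_zero:
  assumes "finite S"
  shows "pseries S c (\<lambda>_. 0) = c (\<lambda>_. 0)"
proof -
  have "pseries S c (\<lambda>_. 0) = (\<Sum>\<^sub>\<infinity>\<beta>\<in>{\<lambda>_. 0}. monom_on S (\<lambda>_. 0) \<beta> *\<^sub>R c \<beta>)"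
    unfolding pseries_def
    by (rule infsum_cong_neutral) (auto simp: monom_on_zero[OF assms] mindices_on_def)
  then show ?thesis by (simp add: monom_on_def)
qed

definition dmonom_on :: "'a set \<Rightarrow> 'a \<Rightarrow> ('a \<Rightarrow> real) \<Rightarrow> ('a \<Rightarrow> nat) \<Rightarrow> real" where
  "dmonom_on S p h \<beta> = real (\<beta> p) * h p ^ (\<beta> p - 1) * monom_on (S - {p}) h \<beta>"

text \<open>Shifting \<open>\<beta> \<mapsto> \<beta>(p := \<beta> p + 1)\<close> turns termwise differentiation of the monomials into
  the coefficient operation \<open>coeff_pderiv p\<close>.\<close>
lemma has_sum_coeff_pderiv_iff:
  assumes S: "finite S" and p: "p \<in> S"
  shows "((\<lambda>\<beta>. monom_on S h \<beta> *\<^sub>R coeff_pderiv p c \<beta>) has_sum s) (mindices_on S) \<longleftrightarrow>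
         ((\<lambda>\<beta>. dmonom_on S p h \<beta> *\<^sub>R c \<beta>) has_sum s) (mindices_on S)"
proof -
  define g where "g = (\<lambda>\<beta>::'a \<Rightarrow> nat. \<beta>(p := Suc (\<beta> p)))"
  have inj: "inj_on g (mindices_on S)"
    by (rule inj_onI) (auto simp: g_def fun_eq_iff split: if_splits)
  have "g ` mindices_on S = {\<gamma> \<in> mindices_on S. \<gamma> p \<noteq> 0}"
  proof
    show "g ` mindices_on S \<subseteq> {\<gamma> \<in> mindices_on S. \<gamma> p \<noteq> 0}"
      using p by (auto simp: g_def mindices_on_def)
    show "{\<gamma> \<in> mindices_on S. \<gamma> p \<noteq> 0} \<subseteq> g ` mindices_on S"
    proof
      fix \<gamma> assume "\<gamma> \<in> {\<gamma> \<in> mindices_on S. \<gamma> p \<noteq> 0}"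
      then have "\<gamma> = g (\<gamma>(p := \<gamma> p - 1))" "\<gamma>(p := \<gamma> p - 1) \<in> mindices_on S"
        using p by (auto simp: g_def mindices_on_def fun_eq_iff)
      then show "\<gamma> \<in> g ` mindices_on S" by blast
    qed
  qed
  then have "((\<lambda>\<beta>. dmonom_on S p h \<beta> *\<^sub>R c \<beta>) has_sum s) (mindices_on S) \<longleftrightarrow>
             ((\<lambda>\<beta>. dmonom_on S p h \<beta> *\<^sub>R c \<beta>) has_sum s) (g ` mindices_on S)"
    by (intro has_sum_cong_neutral) (auto simp: dmonom_on_def)
  also have "\<dots> \<longleftrightarrow> (((\<lambda>\<beta>. dmonom_on S p h \<beta> *\<^sub>R c \<beta>) \<circ> g) has_sum s) (mindices_on S)"
    by (rule has_sum_reindex[OF inj])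
  also have "(\<lambda>\<beta>. dmonom_on S p h \<beta> *\<^sub>R c \<beta>) \<circ> g = (\<lambda>\<beta>. monom_on S h \<beta> *\<^sub>R coeff_pderiv p c \<beta>)"
  proof
    fix \<beta>
    have "monom_on (S - {p}) h (g \<beta>) = monom_on (S - {p}) h \<beta>"
      unfolding monom_on_def by (rule prod.cong) (auto simp: g_def)
    then show "((\<lambda>\<beta>. dmonom_on S p h \<beta> *\<^sub>R c \<beta>) \<circ> g) \<beta> = monom_on S h \<beta> *\<^sub>R coeff_pderiv p c \<beta>"
      by (simp add: dmonom_on_def coeff_pderiv_def monom_on_remove[OF S p] g_def[symmetric])
         (simp add: g_def)
  qed
  finally show ?thesis by simp
qed

lemma has_vector_derivative_quadratic_error:
  fixes f :: "real \<Rightarrow> 'X::real_normed_vector"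
  assumes \<delta>: "\<delta> > 0"
    and err: "\<And>t. \<bar>t - x\<bar> < \<delta> \<Longrightarrow> norm (f t - f x - (t - x) *\<^sub>R D) \<le> K * (t - x)\<^sup>2"
  shows "(f has_vector_derivative D) (at x)"
  unfolding has_vector_derivative_def has_derivative_iff_norm
proof (intro conjI)
  show "bounded_linear (\<lambda>h. h *\<^sub>R D)" by (rule bounded_linear_scaleR_left)
  have "((\<lambda>y. \<bar>K\<bar> * \<bar>y - x\<bar>) \<longlongrightarrow> \<bar>K\<bar> * \<bar>x - x\<bar>) (at x)"
    by (intro tendsto_intros)
  then have lim: "((\<lambda>y. \<bar>K\<bar> * \<bar>y - x\<bar>) \<longlongrightarrow> 0) (at x)" by simp
  have ev: "eventually (\<lambda>y. norm (f y - f x - (y - x) *\<^sub>R D) / norm (y - x) \<le> \<bar>K\<bar> * \<bar>y - x\<bar>) (at x)"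
    unfolding eventually_at
  proof (intro exI[of _ \<delta>] conjI ballI impI)
    fix y :: real assume "y \<noteq> x \<and> dist y x < \<delta>"
    then have y: "\<bar>y - x\<bar> < \<delta>" "\<bar>y - x\<bar> > 0" by (auto simp: dist_real_def)
    have "norm (f y - f x - (y - x) *\<^sub>R D) / norm (y - x) \<le> K * \<bar>y - x\<bar>\<^sup>2 / \<bar>y - x\<bar>"
      using err[OF y(1)] y(2) by (simp add: divide_right_mono)
    also have "\<dots> = K * \<bar>y - x\<bar>"
      using y(2) by (simp only: power2_eq_square) (simp add: field_simps)
    also have "\<dots> \<le> \<bar>K\<bar> * \<bar>y - x\<bar>" by (simp add: mult_right_mono)
    finally show "norm (f y - f x - (y - x) *\<^sub>R D) / norm (y - x) \<le> \<bar>K\<bar> * \<bar>y - x\<bar>" .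
  qed (use \<delta> in auto)
  show "((\<lambda>y. norm (f y - f x - (y - x) *\<^sub>R D) / norm (y - x)) \<longlongrightarrow> 0) (at x)"
    by (rule tendsto_sandwich[OF _ ev tendsto_const lim]) auto
qed

lemma power_linearization_error:
  fixes x y \<rho> :: real
  assumes x: "\<bar>x\<bar> \<le> \<rho>" and y: "\<bar>y\<bar> \<le> \<rho>" and \<rho>: "0 < \<rho>"
  shows "\<bar>y ^ n - x ^ n - real n * x ^ (n - 1) * (y - x)\<bar> \<le> (real n)\<^sup>2 * \<rho> ^ n / \<rho>\<^sup>2 * (y - x)\<^sup>2"
proof (induction n)
  case 0
  then show ?case by simp
next
  case (Suc n)
  define E where "E = y ^ n - x ^ n - real n * x ^ (n - 1) * (y - x)"
  have split: "y ^ Suc n - x ^ Suc n - real (Suc n) * x ^ (Suc n - 1) * (y - x)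
             = y * E + real n * x ^ (n - 1) * (y - x)\<^sup>2"
    by (cases n) (simp_all add: E_def algebra_simps power2_eq_square)
  have pow: "real n * \<rho> ^ (n - 1) = real n * \<rho> ^ Suc n / \<rho>\<^sup>2"
    using \<rho> by (cases n) (simp_all add: power2_eq_square field_simps)
  have sq: "(real n)\<^sup>2 + real n \<le> (real (Suc n))\<^sup>2"
    by (simp add: power2_eq_square algebra_simps)
  have "\<bar>y * E\<bar> \<le> \<rho> * ((real n)\<^sup>2 * \<rho> ^ n / \<rho>\<^sup>2 * (y - x)\<^sup>2)"
    unfolding abs_mult using Suc.IH y by (intro mult_mono) (auto simp: E_def)
  moreover have "\<bar>real n * x ^ (n - 1) * (y - x)\<^sup>2\<bar> \<le> real n * \<rho> ^ (n - 1) * (y - x)\<^sup>2"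
    unfolding abs_mult using x by (auto intro!: mult_mono power_mono simp: power_abs)
  ultimately have "\<bar>y ^ Suc n - x ^ Suc n - real (Suc n) * x ^ (Suc n - 1) * (y - x)\<bar>
        \<le> \<rho> * ((real n)\<^sup>2 * \<rho> ^ n / \<rho>\<^sup>2 * (y - x)\<^sup>2) + real n * \<rho> ^ (n - 1) * (y - x)\<^sup>2"
    unfolding split by linarith
  also have "\<dots> = ((real n)\<^sup>2 + real n) * (\<rho> ^ Suc n / \<rho>\<^sup>2 * (y - x)\<^sup>2)"
    using pow by (simp add: algebra_simps add_divide_distrib)
  also have "\<dots> \<le> (real (Suc n))\<^sup>2 * (\<rho> ^ Suc n / \<rho>\<^sup>2 * (y - x)\<^sup>2)"
    using sq \<rho> by (intro mult_right_mono) simp_all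
  finally show ?case by simp
qed

lemma monom_on_linearization_error:
  assumes S: "finite S" and p: "p \<in> S" and h: "\<And>q. q \<in> S \<Longrightarrow> \<bar>h q\<bar> \<le> \<rho>"
    and t: "\<bar>t\<bar> \<le> \<rho>" and \<rho>: "0 < \<rho>"
  shows "\<bar>monom_on S (h(p := t)) \<beta> - monom_on S h \<beta> - (t - h p) * dmonom_on S p h \<beta>\<bar>
         \<le> (t - h p)\<^sup>2 / \<rho>\<^sup>2 * ((real (mdeg S \<beta>))\<^sup>2 * \<rho> ^ mdeg S \<beta>)"
proof -
  define n where "n = \<beta> p"
  define P where "P = monom_on (S - {p}) h \<beta>"
  have "monom_on (S - {p}) (h(p := t)) \<beta> = P"
    unfolding P_def monom_on_def by (rule prod.cong) auto
  then have "monom_on S (h(p := t)) \<beta> - monom_on S h \<beta> - (t - h p) * dmonom_on S p h \<beta>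
             = (t ^ n - h p ^ n - real n * h p ^ (n - 1) * (t - h p)) * P"
    by (simp add: monom_on_remove[OF S p] dmonom_on_def P_def n_def algebra_simps)
  then have "\<bar>monom_on S (h(p := t)) \<beta> - monom_on S h \<beta> - (t - h p) * dmonom_on S p h \<beta>\<bar>
             = \<bar>t ^ n - h p ^ n - real n * h p ^ (n - 1) * (t - h p)\<bar> * \<bar>P\<bar>"
    by (simp add: abs_mult)
  also have "\<dots> \<le> ((real n)\<^sup>2 * \<rho> ^ n / \<rho>\<^sup>2 * (t - h p)\<^sup>2) * \<rho> ^ mdeg (S - {p}) \<beta>"
  proof (rule mult_mono)
    show "\<bar>t ^ n - h p ^ n - real n * h p ^ (n - 1) * (t - h p)\<bar> \<le> (real n)\<^sup>2 * \<rho> ^ n / \<rho>\<^sup>2 * (t - h p)\<^sup>2"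
      using h[OF p] t \<rho> by (rule power_linearization_error)
    show "\<bar>P\<bar> \<le> \<rho> ^ mdeg (S - {p}) \<beta>"
      unfolding P_def using h by (intro abs_monom_on_le) auto
  qed (use \<rho> in auto)
  also have "\<dots> = (t - h p)\<^sup>2 / \<rho>\<^sup>2 * ((real n)\<^sup>2 * \<rho> ^ mdeg S \<beta>)"
    by (simp add: mdeg_remove[OF S p] n_def power_add field_simps)
  also have "\<dots> \<le> (t - h p)\<^sup>2 / \<rho>\<^sup>2 * ((real (mdeg S \<beta>))\<^sup>2 * \<rho> ^ mdeg S \<beta>)"
    using le_mdeg[OF S p, of \<beta>] \<rho> by (intro mult_left_mono mult_right_mono power_mono) (auto simp: n_def)
  finally show ?thesis .
qed

text \<open>The linearization remainder of each monomial is quadratic in the increment, with a constant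
  that is summable against the coefficients.\<close>
lemma pseries_linearization_error:
  fixes c :: "('a \<Rightarrow> nat) \<Rightarrow> 'X::banach"
  assumes S: "finite S" and p: "p \<in> S" and c: "radius_ge S r c" and \<rho>: "0 < \<rho>" "\<rho> < r"
  obtains K where "\<And>h t. (\<And>q. q \<in> S \<Longrightarrow> \<bar>h q\<bar> \<le> \<rho>) \<Longrightarrow> \<bar>t\<bar> \<le> \<rho> \<Longrightarrow>
    norm (pseries S c (h(p := t)) - pseries S c h - (t - h p) *\<^sub>R pseries S (coeff_pderiv p c) h) \<le> K * (t - h p)\<^sup>2"
proof -
  define c2 where "c2 = (\<lambda>\<beta>. real (mdeg S \<beta>) *\<^sub>R (real (mdeg S \<beta>) *\<^sub>R c \<beta>))"
  have "radius_ge S r c2" unfolding c2_def by (intro radius_ge_scaleR_mdeg c)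
  then obtain G where G: "((\<lambda>\<beta>. norm (c2 \<beta>) * \<rho> ^ mdeg S \<beta>) has_sum G) (mindices_on S)"
    using radius_ge_summable[OF S _ \<rho>] by (auto simp: summable_on_def)
  have "norm (pseries S c (h(p := t)) - pseries S c h - (t - h p) *\<^sub>R pseries S (coeff_pderiv p c) h)
        \<le> G / \<rho>\<^sup>2 * (t - h p)\<^sup>2"
    if h: "\<And>q. q \<in> S \<Longrightarrow> \<bar>h q\<bar> \<le> \<rho>" and t: "\<bar>t\<bar> \<le> \<rho>" for h t
  proof -
    define d where "d = t - h p"
    have ht: "\<And>q. q \<in> S \<Longrightarrow> \<bar>(h(p := t)) q\<bar> \<le> \<rho>" using h t by simp
    have deriv: "((\<lambda>\<beta>. dmonom_on S p h \<beta> *\<^sub>R c \<beta>) has_sum pseries S (coeff_pderiv p c) h) (mindices_on S)"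
      using pseries_has_sum[OF S radius_ge_coeff_pderiv[OF S p c] \<rho> h]
      by (simp add: has_sum_coeff_pderiv_iff[OF S p])
    have "((\<lambda>\<beta>. monom_on S (h(p := t)) \<beta> *\<^sub>R c \<beta> + (-1) *\<^sub>R (monom_on S h \<beta> *\<^sub>R c \<beta>) + (-d) *\<^sub>R (dmonom_on S p h \<beta> *\<^sub>R c \<beta>))
           has_sum (pseries S c (h(p := t)) + (-1) *\<^sub>R pseries S c h + (-d) *\<^sub>R pseries S (coeff_pderiv p c) h)) (mindices_on S)"
      by (intro has_sum_add has_sum_scaleR pseries_has_sum[OF S c \<rho> ht] pseries_has_sum[OF S c \<rho> h] deriv)
    then have err: "((\<lambda>\<beta>. (monom_on S (h(p := t)) \<beta> - monom_on S h \<beta> - d * dmonom_on S p h \<beta>) *\<^sub>R c \<beta>)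
           has_sum (pseries S c (h(p := t)) - pseries S c h - d *\<^sub>R pseries S (coeff_pderiv p c) h)) (mindices_on S)"
      by (simp add: algebra_simps)
    have bound: "((\<lambda>\<beta>. d\<^sup>2 / \<rho>\<^sup>2 * (norm (c2 \<beta>) * \<rho> ^ mdeg S \<beta>)) has_sum (d\<^sup>2 / \<rho>\<^sup>2 * G)) (mindices_on S)"
      by (rule has_sum_cmult_right[OF G])
    have "norm ((monom_on S (h(p := t)) \<beta> - monom_on S h \<beta> - d * dmonom_on S p h \<beta>) *\<^sub>R c \<beta>)
          \<le> d\<^sup>2 / \<rho>\<^sup>2 * (norm (c2 \<beta>) * \<rho> ^ mdeg S \<beta>)" for \<beta>
      using mult_right_mono[OF monom_on_linearization_error[of S p h \<rho> t \<beta>, OF S p h t \<rho>(1)]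
          norm_ge_zero[of "c \<beta>"]]
      by (simp add: c2_def d_def power2_eq_square mult_ac)
    then have "norm (pseries S c (h(p := t)) - pseries S c h - d *\<^sub>R pseries S (coeff_pderiv p c) h) \<le> d\<^sup>2 / \<rho>\<^sup>2 * G"
      by (rule norm_infsum_le[OF err bound])
    then show ?thesis by (simp add: d_def mult.commute)
  qed
  then show ?thesis by (rule that)
qed

lemma pseries_has_vector_derivative:
  fixes c :: "('a \<Rightarrow> nat) \<Rightarrow> 'X::banach"
  assumes S: "finite S" and p: "p \<in> S" and c: "radius_ge S r c" and h: "\<And>q. q \<in> S \<Longrightarrow> \<bar>h q\<bar> < r"
  shows "((\<lambda>t. pseries S c (h(p := t))) has_vector_derivative pseries S (coeff_pderiv p c) h) (at (h p))"
proof -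
  define m where "m = Max ((\<lambda>q. \<bar>h q\<bar>) ` S)"
  have hm: "\<And>q. q \<in> S \<Longrightarrow> \<bar>h q\<bar> \<le> m" unfolding m_def using S by (intro Max_ge) auto
  have "m < r" unfolding m_def using S p h by (subst Max_less_iff) auto
  define \<rho> where "\<rho> = (m + r) / 2"
  have \<rho>: "0 < \<rho>" "\<rho> < r" and "0 < \<rho> - m" and h\<rho>: "\<And>q. q \<in> S \<Longrightarrow> \<bar>h q\<bar> \<le> \<rho>"
    using hm[OF p] hm \<open>m < r\<close> by (force simp: \<rho>_def)+
  obtain K where K: "\<And>h t. (\<And>q. q \<in> S \<Longrightarrow> \<bar>h q\<bar> \<le> \<rho>) \<Longrightarrow> \<bar>t\<bar> \<le> \<rho> \<Longrightarrow>
      norm (pseries S c (h(p := t)) - pseries S c h - (t - h p) *\<^sub>R pseries S (coeff_pderiv p c) h) \<le> K * (t - h p)\<^sup>2"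
    using pseries_linearization_error[OF S p c \<rho>] by blast
  show ?thesis
  proof (rule has_vector_derivative_quadratic_error[OF \<open>0 < \<rho> - m\<close>])
    fix t assume "\<bar>t - h p\<bar> < \<rho> - m"
    then have "\<bar>t\<bar> \<le> \<rho>" using hm[OF p] by linarith
    then show "norm (pseries S c (h(p := t)) - pseries S c (h(p := h p)) - (t - h p) *\<^sub>R pseries S (coeff_pderiv p c) h)
               \<le> K * (t - h p)\<^sup>2"
      using K[OF h\<rho>] by simp
  qed
qed

lemma foldr_coeff_pderiv:
  assumes S: "finite S"
  shows "set ps \<subseteq> S \<Longrightarrow> foldr coeff_pderiv ps c \<beta>
           = (\<Prod>q\<in>S. fact (\<beta> q + count (mset ps) q) / fact (\<beta> q) :: real) *\<^sub>R c (\<lambda>q. \<beta> q + count (mset ps) q)"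
proof (induction ps arbitrary: \<beta>)
  case Nil
  then show ?case by simp
next
  case (Cons p ps)
  have p: "p \<in> S" and ps: "set ps \<subseteq> S" using Cons.prems by auto
  define \<beta>' where "\<beta>' = \<beta>(p := Suc (\<beta> p))"
  define f' where "f' = (\<lambda>q. fact (\<beta>' q + count (mset ps) q) / fact (\<beta>' q) :: real)"
  define f where "f = (\<lambda>q. fact (\<beta> q + count (mset (p # ps)) q) / fact (\<beta> q) :: real)"
  have shift: "(\<lambda>q. \<beta>' q + count (mset ps) q) = (\<lambda>q. \<beta> q + count (mset (p # ps)) q)"
    by (auto simp: \<beta>'_def)
  have "(\<Prod>q\<in>S - {p}. f' q) = (\<Prod>q\<in>S - {p}. f q)"
    by (rule prod.cong) (auto simp: f'_def f_def \<beta>'_def)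
  moreover have "real (Suc (\<beta> p)) * f' p = f p"
    by (simp add: f'_def f_def \<beta>'_def fact_Suc[of "\<beta> p"] del: fact_Suc)
  ultimately have prod_eq: "real (Suc (\<beta> p)) * (\<Prod>q\<in>S. f' q) = (\<Prod>q\<in>S. f q)"
    using S p by (simp add: prod.remove mult.assoc)
  have "foldr coeff_pderiv (p # ps) c \<beta> = real (Suc (\<beta> p)) *\<^sub>R foldr coeff_pderiv ps c \<beta>'"
    by (simp add: coeff_pderiv_def \<beta>'_def)
  also have "\<dots> = (real (Suc (\<beta> p)) * (\<Prod>q\<in>S. f' q)) *\<^sub>R c (\<lambda>q. \<beta>' q + count (mset ps) q)"
    using Cons.IH[OF ps, of \<beta>'] by (simp add: f'_def)
  finally show ?case by (simp only: prod_eq shift f_def)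
qed

lemma nbhd0_upd: "h \<in> nbhd0 r S \<Longrightarrow> p \<in> S \<Longrightarrow> \<bar>y\<bar> < r \<Longrightarrow> h(p := y) \<in> nbhd0 r S"
  by (auto simp: nbhd0_def)

lemma has_vector_derivative_if_eq_pseries:
  fixes c :: "mindex \<Rightarrow> 'X::banach"
  assumes S: "finite S" and c: "radius_ge S r c" and F: "\<And>h. h \<in> nbhd0 r S \<Longrightarrow> F h = pseries S c h"
    and p: "p \<in> S" and h: "h \<in> nbhd0 r S"
  shows "((\<lambda>t. F (h(p := t))) has_vector_derivative pseries S (coeff_pderiv p c) h) (at (h p))"
proof (rule has_vector_derivative_transform_within_open)
  show "((\<lambda>t. pseries S c (h(p := t))) has_vector_derivative pseries S (coeff_pderiv p c) h) (at (h p))"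
    using h by (intro pseries_has_vector_derivative[OF S p c]) (auto simp: nbhd0_def)
  show "open (ball (0::real) r)" by simp
  show "h p \<in> ball 0 r" using h p by (auto simp: nbhd0_def)
  show "pseries S c (h(p := y)) = F (h(p := y))" if "y \<in> ball 0 r" for y
    using that F[OF nbhd0_upd[OF h p]] by simp
qed

lemma pderivs_eq_pseries:
  fixes c :: "mindex \<Rightarrow> 'X::banach"
  assumes S: "finite S" and c: "radius_ge S r c" and F: "\<And>h. h \<in> nbhd0 r S \<Longrightarrow> F h = pseries S c h"
  shows "set ps \<subseteq> S \<Longrightarrow> h \<in> nbhd0 r S \<Longrightarrow> pderivs ps F h = pseries S (foldr coeff_pderiv ps c) h"
proof (induction ps arbitrary: h)
  case Nil
  then show ?case using F by simp
next
  case (Cons p ps)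
  then have p: "p \<in> S" and ps: "set ps \<subseteq> S" by auto
  have "((\<lambda>t. pderivs ps F (h(p := t))) has_vector_derivative
          pseries S (coeff_pderiv p (foldr coeff_pderiv ps c)) h) (at (h p))"
    by (rule has_vector_derivative_if_eq_pseries[OF S radius_ge_coeff_pderivs[OF S ps c] Cons.IH[OF ps] p Cons.prems(2)])
  then show ?case by (simp add: vector_derivative_at)
qed

lemma pderivs_exist_on_pseries:
  fixes c :: "mindex \<Rightarrow> 'X::banach"
  assumes S: "finite S" and ps: "set ps \<subseteq> S" and c: "radius_ge S r c"
    and F: "\<And>h. h \<in> nbhd0 r S \<Longrightarrow> F h = pseries S c h"
  shows "pderivs_exist_on (nbhd0 r S) ps F"
  unfolding pderivs_exist_on_def
proof (intro allI impI ballI)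
  fix j h assume j: "j < length ps" and h: "h \<in> nbhd0 r S"
  have drop: "drop j ps = ps ! j # drop (Suc j) ps" using j by (rule Cons_nth_drop_Suc[symmetric])
  have "set (drop j ps) \<subseteq> S" using ps set_drop_subset by fast
  then have p: "ps ! j \<in> S" and ps': "set (drop (Suc j) ps) \<subseteq> S" unfolding drop by auto
  have "pderivs (drop j ps) F h = pseries S (coeff_pderiv (ps ! j) (foldr coeff_pderiv (drop (Suc j) ps) c)) h"
    using pderivs_eq_pseries[OF S c F \<open>set (drop j ps) \<subseteq> S\<close> h] by (simp add: drop)
  then show "((\<lambda>t. pderivs (drop (Suc j) ps) F (h(ps ! j := t))) has_vector_derivative
            pderivs (drop j ps) F h) (at (h (ps ! j)))"
    using has_vector_derivative_if_eq_pseries[OF S radius_ge_coeff_pderivs[OF S ps' c]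
        pderivs_eq_pseries[OF S c F ps'] p h] by simp
qed

definition Scoeff :: "(mindex \<Rightarrow> 'X::real_normed_vector) \<Rightarrow> mindex \<Rightarrow> 'X" where
  "Scoeff u \<beta> = (1 / sqrt (mfact \<beta>)) *\<^sub>R u \<beta>"

lemma mfact_ge_1: "1 \<le> mfact \<beta>"
  unfolding mfact_def by (intro prod_ge_1) (simp add: fact_ge_1)

lemma norm_Scoeff_squared: "(norm (Scoeff u \<beta>))\<^sup>2 = (norm (u \<beta>))\<^sup>2 / mfact \<beta>"
  using mfact_ge_1[of \<beta>] by (simp add: Scoeff_def power_divide)

lemma msupp_subset_if_mindices_on: "\<beta> \<in> mindices_on S \<Longrightarrow> msupp \<beta> \<subseteq> S"
  unfolding mindices_on_def msupp_def by (metis (mono_tags, lifting) mem_Collect_eq subsetI)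

lemma msupp_subset_if_MJ: "\<alpha> \<in> MJ \<Longrightarrow> msupp \<alpha> \<subseteq> {1..} \<times> {1..}"
  by (auto simp: MJ_def msupp_def)

lemma mindices_on_subset_MJ:
  assumes "finite S" "S \<subseteq> {1..} \<times> {1..}"
  shows "mindices_on S \<subseteq> MJ"
proof
  fix \<beta> assume "\<beta> \<in> mindices_on S"
  then have "msupp \<beta> \<subseteq> S" by (rule msupp_subset_if_mindices_on)
  with assms show "\<beta> \<in> MJ" by (auto simp: MJ_def msupp_def finite_subset)
qed

lemma Stransform_eq_pseries:
  assumes S: "finite S" "S \<subseteq> {1..} \<times> {1..}" and h: "\<And>p. p \<notin> S \<Longrightarrow> h p = 0"
  shows "Stransform u h = pseries S (Scoeff u) h"
  unfolding Stransform_def pseries_def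
proof (rule infsum_cong_neutral)
  fix \<beta> assume "\<beta> \<in> mindices_on S - MJ"
  with mindices_on_subset_MJ[OF S] show "monom_on S h \<beta> *\<^sub>R Scoeff u \<beta> = 0" by blast
next
  fix \<beta> assume \<beta>: "\<beta> \<in> MJ - mindices_on S"
  then obtain q where "q \<notin> S" "\<beta> q \<noteq> 0" by (auto simp: mindices_on_def)
  moreover have "finite (msupp \<beta>)" using \<beta> by (simp add: MJ_def)
  ultimately have "hpow h \<beta> = 0"
    unfolding hpow_def using h by (intro prod_zero bexI[of _ q]) (auto simp: msupp_def)
  then show "(hpow h \<beta> / sqrt (mfact \<beta>)) *\<^sub>R u \<beta> = 0" by simp
next
  fix \<beta> assume "\<beta> \<in> MJ \<inter> mindices_on S"
  then have "hpow h \<beta> = monom_on S h \<beta>"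
    unfolding hpow_def monom_on_def
    by (intro prod.mono_neutral_left S(1) msupp_subset_if_mindices_on) (auto simp: msupp_def)
  then show "(hpow h \<beta> / sqrt (mfact \<beta>)) *\<^sub>R u \<beta> = monom_on S h \<beta> *\<^sub>R Scoeff u \<beta>"
    by (simp add: Scoeff_def)
qed

text \<open>Both growth conditions on \<open>u\<close> are weighted square-summability conditions whose weights,
  on multi-indices supported in a fixed finite set, dominate a geometric weight \<open>m ^ mdeg S \<beta>\<close>.\<close>
lemma radius_ge_if_weighted_summable:
  fixes c :: "mindex \<Rightarrow> 'X::real_normed_vector"
  assumes w: "w summable_on MJ" "\<And>\<beta>. \<beta> \<in> MJ \<Longrightarrow> 0 \<le> w \<beta>" and S: "mindices_on S \<subseteq> MJ"
    and m: "0 < m" and dom: "\<And>\<beta>. \<beta> \<in> mindices_on S \<Longrightarrow> m ^ mdeg S \<beta> * (norm (c \<beta>))\<^sup>2 \<le> w \<beta>"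
  shows "radius_ge S (sqrt m) c"
  unfolding radius_ge_def
proof (intro allI impI)
  fix \<rho> assume \<rho>: "0 < \<rho> \<and> \<rho> < sqrt m"
  have "norm (c \<beta>) * \<rho> ^ mdeg S \<beta> \<le> sqrt (infsum w MJ)" if \<beta>: "\<beta> \<in> mindices_on S" for \<beta>
  proof -
    have "norm (c \<beta>) * \<rho> ^ mdeg S \<beta> \<le> norm (c \<beta>) * sqrt m ^ mdeg S \<beta>"
      using \<rho> by (intro mult_left_mono power_mono) auto
    also have "\<dots> = sqrt (m ^ mdeg S \<beta> * (norm (c \<beta>))\<^sup>2)"
      using m by (simp add: real_sqrt_mult real_sqrt_power)
    also have "\<dots> \<le> sqrt (w \<beta>)" using dom[OF \<beta>] by simp
    also have "\<dots> \<le> sqrt (infsum w MJ)"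
      using finite_sum_le_infsum[of w MJ "{\<beta>}"] w S \<beta> by auto
    finally show ?thesis .
  qed
  then show "\<exists>M. \<forall>\<beta>\<in>mindices_on S. norm (c \<beta>) * \<rho> ^ mdeg S \<beta> \<le> M" by blast
qed

lemma power_mdeg_le_prod_msupp:
  fixes m :: real and f :: "nat \<times> nat \<Rightarrow> nat \<Rightarrow> real"
  assumes S: "finite S" and \<beta>: "\<beta> \<in> mindices_on S" and m: "0 < m"
    and f: "\<And>p n. p \<in> S \<Longrightarrow> m ^ n \<le> f p n"
  shows "m ^ mdeg S \<beta> \<le> (\<Prod>p\<in>msupp \<beta>. f p (\<beta> p))"
proof -
  have "m ^ mdeg S \<beta> = (\<Prod>p\<in>msupp \<beta>. m ^ \<beta> p)"
    unfolding power_mdeg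
    by (rule prod.mono_neutral_right[OF S msupp_subset_if_mindices_on[OF \<beta>]]) (auto simp: msupp_def)
  also have "\<dots> \<le> (\<Prod>p\<in>msupp \<beta>. f p (\<beta> p))"
    using msupp_subset_if_mindices_on[OF \<beta>] m by (intro prod_mono) (auto intro!: f)
  finally show ?thesis .
qed

lemma radius_ge_Scoeff_if_in_L2Q:
  fixes u :: "mindex \<Rightarrow> 'X::real_normed_vector"
  assumes S: "finite S" "S \<subseteq> {1..} \<times> {1..}" and q: "\<forall>k\<ge>1. q k > 0" and u: "in_L2Q q u"
  shows "\<exists>r>0. radius_ge S r (Scoeff u)"
proof -
  define m where "m = Min (insert 1 ((\<lambda>p. q (snd p)) ` S))"
  have qS: "\<And>p. p \<in> S \<Longrightarrow> 0 < q (snd p)" using S(2) q by auto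
  have m: "0 < m" unfolding m_def using S(1) qS by (subst Min_gr_iff) auto
  have m_le: "m \<le> q (snd p)" if "p \<in> S" for p
    unfolding m_def using S(1) that by (intro Min_le) auto
  have "m ^ mdeg S \<beta> \<le> qpow q \<beta>" if \<beta>: "\<beta> \<in> mindices_on S" for \<beta>
  proof -
    have "qpow q \<beta> = (\<Prod>p\<in>msupp \<beta>. q (snd p) ^ \<beta> p)"
      unfolding qpow_def by (rule prod.cong) (simp_all add: case_prod_beta)
    moreover have "m ^ n \<le> q (snd p) ^ n" if "p \<in> S" for p n
      using m_le[OF that] m by (intro power_mono) simp_all
    ultimately show ?thesis
      using power_mdeg_le_prod_msupp[OF S(1) \<beta> m, of "\<lambda>p n. q (snd p) ^ n"] by simp
  qed
  moreover have "(norm (Scoeff u \<beta>))\<^sup>2 \<le> (norm (u \<beta>))\<^sup>2" for \<beta>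
    unfolding norm_Scoeff_squared using mfact_ge_1[of \<beta>]
    by (simp add: divide_le_eq) (metis mult.right_neutral mult_left_mono zero_le_power2)
  moreover have sq: "(m\<^sup>2) ^ k = (m ^ k)\<^sup>2" for k :: nat
    by (simp add: power2_eq_square power_mult_distrib)
  ultimately have "(m\<^sup>2) ^ mdeg S \<beta> * (norm (Scoeff u \<beta>))\<^sup>2 \<le> (qpow q \<beta>)\<^sup>2 * (norm (u \<beta>))\<^sup>2"
    if "\<beta> \<in> mindices_on S" for \<beta>
    unfolding sq using that m by (intro mult_mono[OF power_mono]) auto
  then have "radius_ge S (sqrt (m\<^sup>2)) (Scoeff u)"
    using u m mindices_on_subset_MJ[OF S] unfolding in_L2Q_def
    by (intro radius_ge_if_weighted_summable) auto
  then show ?thesis using m by auto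
qed

lemma radius_ge_Scoeff_if_in_S:
  fixes u :: "mindex \<Rightarrow> 'X::real_normed_vector"
  assumes S: "finite S" "S \<subseteq> {1..} \<times> {1..}" and \<rho>: "0 \<le> \<rho>" "\<rho> \<le> 1" and u: "in_S \<rho> \<gamma> u"
  shows "\<exists>r>0. radius_ge S r (Scoeff u)"
proof -
  define x where "x = (\<lambda>p::nat \<times> nat. 2 * real (fst p) * real (snd p))"
  define m where "m = Min (insert 1 ((\<lambda>p. x p powr (-\<gamma>)) ` S))"
  have x: "\<And>p. p \<in> S \<Longrightarrow> 0 < x p" using S(2) by (force simp: x_def)
  then have "\<forall>p\<in>S. 0 < x p powr (-\<gamma>)" by (simp add: less_imp_neq[symmetric])
  then have m: "0 < m" unfolding m_def using S(1) by (subst Min_gr_iff) auto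
  have m_le: "m \<le> x p powr (-\<gamma>)" if "p \<in> S" for p
    unfolding m_def using S(1) that by (intro Min_le) auto
  define P where "P = (\<lambda>\<beta>. \<Prod>(i,k)\<in>msupp \<beta>. (2 * real i * real k) powr (- \<gamma> * real (\<beta> (i,k))))"
  have "m ^ mdeg S \<beta> \<le> P \<beta>" if \<beta>: "\<beta> \<in> mindices_on S" for \<beta>
  proof -
    have "P \<beta> = (\<Prod>p\<in>msupp \<beta>. x p powr (- \<gamma> * real (\<beta> p)))"
      unfolding P_def x_def by (rule prod.cong) (simp_all add: case_prod_beta)
    moreover have "m ^ n \<le> x p powr (- \<gamma> * real n)" if "p \<in> S" for p n
    proof -
      have "m ^ n \<le> (x p powr (-\<gamma>)) ^ n" using m_le[OF that] m by (intro power_mono) auto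
      also have "\<dots> = x p powr (- \<gamma> * real n)" using x[OF that] by (simp add: powr_realpow[symmetric] powr_powr)
      finally show ?thesis .
    qed
    ultimately show ?thesis
      using power_mdeg_le_prod_msupp[OF S(1) \<beta> m, of "\<lambda>p n. x p powr (- \<gamma> * real n)"] by simp
  qed
  moreover have "(norm (Scoeff u \<beta>))\<^sup>2 \<le> mfact \<beta> powr (-\<rho>) * (norm (u \<beta>))\<^sup>2" for \<beta>
  proof -
    have "1 / mfact \<beta> = mfact \<beta> powr (-1)" using mfact_ge_1[of \<beta>] by (simp add: powr_minus_divide)
    also have "\<dots> \<le> mfact \<beta> powr (-\<rho>)" using mfact_ge_1[of \<beta>] \<rho> by (intro powr_mono) auto
    finally have "1 / mfact \<beta> \<le> mfact \<beta> powr (-\<rho>)" .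
    from mult_right_mono[OF this zero_le_power2[of "norm (u \<beta>)"]]
    show ?thesis unfolding norm_Scoeff_squared by simp
  qed
  moreover have "0 \<le> P \<beta>" for \<beta> unfolding P_def by (intro prod_nonneg) (auto simp: case_prod_beta)
  ultimately have "m ^ mdeg S \<beta> * (norm (Scoeff u \<beta>))\<^sup>2 \<le> P \<beta> * (mfact \<beta> powr (-\<rho>) * (norm (u \<beta>))\<^sup>2)"
    if "\<beta> \<in> mindices_on S" for \<beta>
    using that by (intro mult_mono) auto
  then have "radius_ge S (sqrt m) (Scoeff u)"
    using u m mindices_on_subset_MJ[OF S] unfolding in_S_def P_def
    by (intro radius_ge_if_weighted_summable) (auto intro!: mult_nonneg_nonneg prod_nonneg simp: case_prod_beta mult_ac)
  then show ?thesis using m real_sqrt_gt_zero by blast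
qed

theorem proposition7p12:
  fixes u :: "mindex \<Rightarrow> 'X::banach"
  assumes "(\<exists>q :: nat \<Rightarrow> real. (\<forall>k\<ge>1. q k > 0) \<and> in_L2Q q u)
         \<or> (\<exists>\<rho>::real. 0 \<le> \<rho> \<and> \<rho> \<le> 1 \<and> (\<exists>\<gamma>::real. 0 \<le> \<gamma> \<and> in_S \<rho> \<gamma> u))"
    and "\<alpha> \<in> MJ"
    and "\<forall>p. count (mset ps) p = \<alpha> p"
  shows "\<exists>e>0. pderivs_exist_on (nbhd0 e (msupp \<alpha>)) ps (Stransform u)
           \<and> u \<alpha> = (1 / sqrt (mfact \<alpha>)) *\<^sub>R pderivs ps (Stransform u) (\<lambda>_. 0)"
proof -
  define S where "S = msupp \<alpha>"
  have S: "finite S" "S \<subseteq> {1..} \<times> {1..}"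
    using assms(2) msupp_subset_if_MJ by (auto simp: S_def MJ_def)
  obtain r where "r > 0" and r: "radius_ge S r (Scoeff u)"
    using assms(1) radius_ge_Scoeff_if_in_L2Q[OF S] radius_ge_Scoeff_if_in_S[OF S] by blast
  have count: "count (mset ps) = \<alpha>" using assms(3) by auto
  then have ps: "set ps \<subseteq> S" by (auto simp: S_def msupp_def)
  have F: "Stransform u h = pseries S (Scoeff u) h" if "h \<in> nbhd0 r S" for h
    using that by (intro Stransform_eq_pseries[OF S]) (auto simp: nbhd0_def)
  have "pderivs ps (Stransform u) (\<lambda>_. 0) = pseries S (foldr coeff_pderiv ps (Scoeff u)) (\<lambda>_. 0)"
    using \<open>r > 0\<close> by (intro pderivs_eq_pseries[OF S(1) r F ps]) (auto simp: nbhd0_def)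
  also have "\<dots> = foldr coeff_pderiv ps (Scoeff u) (\<lambda>_. 0)"
    by (rule pseries_zero[OF S(1)])
  also have "\<dots> = mfact \<alpha> *\<^sub>R Scoeff u \<alpha>"
    using foldr_coeff_pderiv[OF S(1) ps, of "Scoeff u" "\<lambda>_. 0"] by (simp add: count mfact_def S_def)
  finally have "u \<alpha> = (1 / sqrt (mfact \<alpha>)) *\<^sub>R pderivs ps (Stransform u) (\<lambda>_. 0)"
    using mfact_ge_1[of \<alpha>] by (simp add: Scoeff_def)
  with pderivs_exist_on_pseries[OF S(1) ps r F] \<open>r > 0\<close> show ?thesis
    unfolding S_def by blast
qed

end
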